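(* Let $\mathfrak{m}$ be a maximal ideal of $K(\!(\mathbf{t})\!)^\circ$ and define, for $I,J\in\mathbb{N}^m$, \[ I\preceq_{\mathfrak m}J\quad\Longleftrightarrow\quad \frac{\mathbf{t}^I}{\mathbf{t}^I+\mathbf{t}^J}\notin\mathfrak{m}. \] Then $\preceq_{\mathfrak m}$ is a monomial order on $\mathbb{N}^m$: it is a total order (reflexive, antisymmetric, transitive, any two elements comparable) with $0\preceq_{\mathfrak m}J$ for all $J$ and $I\preceq_{\mathfrak m}J\Rightarrow I+L\preceq_{\mathfrak m}J+L$ for all $L\in\mathbb{N}^m$.
   Context: $K$ is a field of characteristic zero, $\mathbf{t}=(t_1,\dots,t_m)$, $K(\!(\mathbf{t})\!)=\operatorname{Frac}K[\![\mathbf{t}]\!]$. $V\mathbb{B}[\mathbf{t}]$ is the semiring of subsets of $\mathbb{N}^m$ equal to the vertex set of their Newton polyhedron $\operatorname{conv}(\cdot)+\mathbb{R}^m_{\ge0}$, with $a\oplus b$ = vertices of the Newton polyhedron of $a\cup b$, $a\odot b$ = vertices of that of $a+b$; $V\mathbb{B}(\mathbf{t})$ is its fraction semifield, ordered by $a/b\le c/d$ iff $a\odot d\oplus b\odot c=b\odot c$. $\operatorname{trop}(f)$ is the vertex set of the Newton polyhedron of $\operatorname{Supp}(f)$, $\operatorname{trop}(f/g)=\operatorname{trop}(f)/\operatorname{trop}(g)$, and $K(\!(\mathbf{t})\!)^\circ=\{q:\operatorname{trop}(q)\le1\}$. *)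

theory Defs
  imports "HOL-Analysis.Analysis" "HOL-Algebra.Ideal"
begin

text \<open>Exponent vectors in N^m are functions 'n => nat for a finite index type 'n
  (m = CARD('n)).  Formal power series in K[[t_1..t_m]] are arbitrary coefficient
  functions ('n => nat) => 'k.\<close>

type_synonym 'n expo = "'n \<Rightarrow> nat"
type_synonym ('n, 'k) mps = "'n expo \<Rightarrow> 'k"

definition expo_add :: "'n expo \<Rightarrow> 'n expo \<Rightarrow> 'n expo" where
  "expo_add I J = (\<lambda>i. I i + J i)"

definition expo_zero :: "'n expo" where
  "expo_zero = (\<lambda>i. 0)"

definition mps_zero :: "('n, 'k::field) mps" where
  "mps_zero = (\<lambda>I. 0)"

definition mps_add :: "('n, 'k::field) mps \<Rightarrow> ('n, 'k) mps \<Rightarrow> ('n, 'k) mps" where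
  "mps_add f g = (\<lambda>I. f I + g I)"

text \<open>Cauchy product; the index set is finite since 'n is finite.\<close>
definition mps_mult :: "('n::finite, 'k::field) mps \<Rightarrow> ('n, 'k) mps \<Rightarrow> ('n, 'k) mps" where
  "mps_mult f g = (\<lambda>I. \<Sum>p\<in>{p. expo_add (fst p) (snd p) = I}. f (fst p) * g (snd p))"

definition monom_t :: "'n expo \<Rightarrow> ('n, 'k::field) mps" where
  "monom_t I = (\<lambda>J. if J = I then 1 else 0)"

definition supp :: "('n, 'k::field) mps \<Rightarrow> 'n expo set" where
  "supp f = {I. f I \<noteq> 0}"

subsection \<open>Fraction field K((t)) = Frac K[[t]] as equivalence classes of pairs\<close>

definition frac_class :: "('n::finite, 'k::field) mps \<Rightarrow> ('n, 'k) mps \<Rightarrow> (('n, 'k) mps \<times> ('n, 'k) mps) set" where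
  "frac_class f g = {(f', g'). g' \<noteq> mps_zero \<and> mps_mult f g' = mps_mult f' g}"

definition laurent_field :: "(('n::finite, 'k::field) mps \<times> ('n, 'k) mps) set set" where
  "laurent_field = {frac_class f g | f g. g \<noteq> mps_zero}"

definition frac_rep :: "(('n, 'k) mps \<times> ('n, 'k) mps) set \<Rightarrow> ('n, 'k) mps \<times> ('n, 'k) mps" where
  "frac_rep X = (SOME p. p \<in> X)"

definition frac_add :: "(('n::finite, 'k::field) mps \<times> ('n, 'k) mps) set \<Rightarrow> (('n, 'k) mps \<times> ('n, 'k) mps) set \<Rightarrow> (('n, 'k) mps \<times> ('n, 'k) mps) set" where
  "frac_add X Y = (case (frac_rep X, frac_rep Y) of ((f, g), (f', g')) \<Rightarrow>
      frac_class (mps_add (mps_mult f g') (mps_mult f' g)) (mps_mult g g'))"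

definition frac_mult :: "(('n::finite, 'k::field) mps \<times> ('n, 'k) mps) set \<Rightarrow> (('n, 'k) mps \<times> ('n, 'k) mps) set \<Rightarrow> (('n, 'k) mps \<times> ('n, 'k) mps) set" where
  "frac_mult X Y = (case (frac_rep X, frac_rep Y) of ((f, g), (f', g')) \<Rightarrow>
      frac_class (mps_mult f f') (mps_mult g g'))"

definition frac_zero :: "(('n::finite, 'k::field) mps \<times> ('n, 'k) mps) set" where
  "frac_zero = frac_class mps_zero (monom_t expo_zero)"

definition frac_one :: "(('n::finite, 'k::field) mps \<times> ('n, 'k) mps) set" where
  "frac_one = frac_class (monom_t expo_zero) (monom_t expo_zero)"

definition expo_emb :: "'n::finite expo \<Rightarrow> real ^ 'n" where
  "expo_emb I = (\<chi> i. real (I i))"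

definition newton_polyhedron :: "'n::finite expo set \<Rightarrow> (real ^ 'n) set" where
  "newton_polyhedron S =
     {x + y | x y. x \<in> convex hull (expo_emb ` S) \<and> (\<forall>i. 0 \<le> y $ i)}"

definition newton_vertices :: "'n::finite expo set \<Rightarrow> 'n expo set" where
  "newton_vertices S = {I. expo_emb I extreme_point_of newton_polyhedron S}"

definition vb_plus :: "'n::finite expo set \<Rightarrow> 'n expo set \<Rightarrow> 'n expo set" where
  "vb_plus a b = newton_vertices (a \<union> b)"

definition vb_times :: "'n::finite expo set \<Rightarrow> 'n expo set \<Rightarrow> 'n expo set" where
  "vb_times a b = newton_vertices {expo_add A B | A B. A \<in> a \<and> B \<in> b}"

definition vb_one :: "'n expo set" where
  "vb_one = {expo_zero}"

text \<open>Order on the fraction semifield VB(t): a/b <= c/d iff a.d + b.c = b.c.\<close>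
definition vb_frac_le :: "'n::finite expo set \<times> 'n expo set \<Rightarrow> 'n expo set \<times> 'n expo set \<Rightarrow> bool" where
  "vb_frac_le p q = (case (p, q) of ((a, b), (c, d)) \<Rightarrow>
      vb_plus (vb_times a d) (vb_times b c) = vb_times b c)"

definition trop :: "('n::finite, 'k::field) mps \<Rightarrow> 'n expo set" where
  "trop f = newton_vertices (supp f)"

text \<open>trop(f/g) = trop f / trop g; the ring K((t))^o = {q. trop q <= 1}.\<close>
definition laurent_circ :: "(('n::finite, 'k::field) mps \<times> ('n, 'k) mps) set set" where
  "laurent_circ = {X \<in> laurent_field.
      \<exists>(f, g) \<in> X. vb_frac_le (trop f, trop g) (vb_one, vb_one)}"

definition laurent_circ_ring :: "(('n::finite, 'k::field) mps \<times> ('n, 'k) mps) set ring" where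
  "laurent_circ_ring = \<lparr>carrier = laurent_circ, monoid.mult = frac_mult, one = frac_one,
      zero = frac_zero, add = frac_add\<rparr>"

definition mord :: "(('n::finite, 'k::field) mps \<times> ('n, 'k) mps) set set \<Rightarrow> 'n expo \<Rightarrow> 'n expo \<Rightarrow> bool" where
  "mord M I J \<longleftrightarrow> frac_class (monom_t I) (mps_add (monom_t I) (monom_t J)) \<notin> M"

end

theory Submission
  imports Defs "HOL-Library.Function_Algebras" "HOL-Algebra.Divisibility"
begin

(* Write x(I,J) = t^I / (t^I + t^J), so that I <=_m J means that x(I,J) is not in m.
   Since x(I,J) + x(J,I) = 1, the two cannot both lie in m (totality, hence reflexivity);
   x(I+L,J+L) = x(I,J) gives translation invariance, and x(0,J) is a unit because its
   inverse 1 + t^J lies in the ring, so 0 <=_m J.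
   For I <> J the product x(I,J) x(J,I) = t^(I+J) / (t^I + t^J)^2 lies in the Jacobson
   radical: for f/g in the ring, 1 - (f/g) t^(I+J) / (t^I + t^J)^2 = h/G with
   G = g (t^I + t^J)^2 and h = G - t^(I+J) f, and G/h is again in the ring. Indeed, a point
   of supp G outside the Newton polyhedron of h is separated from it by a nonnegative
   weight; in a monomial order refining that weight the leading term of G is t^(2I) times
   that of g (I the smaller of I, J), and it cannot cancel against t^(I+J) f because
   supp f lies in the Newton polyhedron of g. As m is prime, x(I,J) or x(J,I) lies in m,
   which is antisymmetry. Transitivity follows from x(I,J) x(J,L) x(L,I) = x(J,I) x(L,J) x(I,L). *)

section \<open>Power series in several variables\<close>

lemma expo_add_eq_plus [simp]: "expo_add I J = I + J"
  by (simp add: expo_add_def plus_fun_def)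

lemma expo_zero_eq_zero [simp]: "expo_zero = 0"
  by (simp add: expo_zero_def zero_fun_def)

lemma mps_add_eq_plus [simp]: "mps_add f g = f + g"
  by (simp add: mps_add_def plus_fun_def)

lemma mps_zero_eq_zero [simp]: "mps_zero = 0"
  by (simp add: mps_zero_def zero_fun_def)

lemma finite_atMost_expo: "finite {..I :: 'n::finite expo}"
proof -
  have "{..I} = Pi\<^sub>E UNIV (\<lambda>i. {..I i})"
    by (auto simp: le_fun_def PiE_iff)
  then show ?thesis
    by (simp add: finite_PiE)
qed

lemma finite_splits: "finite {p :: 'n::finite expo \<times> 'n expo. fst p + snd p = I}"
  by (rule finite_subset[of _ "{..I} \<times> {..I}"]) (auto simp: le_fun_def finite_atMost_expo)

lemma mps_mult_eq: "mps_mult f g I = (\<Sum>p | fst p + snd p = I. f (fst p) * g (snd p))"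
  by (simp add: mps_mult_def)

lemma mps_mult_commute: "mps_mult f g = mps_mult g (f :: ('n::finite, 'k::field) mps)"
proof
  fix I
  show "mps_mult f g I = mps_mult g f I"
    unfolding mps_mult_eq
    by (rule sum.reindex_bij_witness[where i=prod.swap and j=prod.swap]) (auto simp: add.commute)
qed

lemma mps_mult_assoc:
  "mps_mult (mps_mult f g) h = mps_mult f (mps_mult g (h :: ('n::finite, 'k::field) mps))"
proof
  fix I
  have left: "mps_mult (mps_mult f g) h I =
      (\<Sum>x \<in> Sigma {p. fst p + snd p = I} (\<lambda>p. {q. fst q + snd q = fst p}).
         f (fst (snd x)) * g (snd (snd x)) * h (snd (fst x)))"
    unfolding mps_mult_eq sum_distrib_right
    by (subst sum.Sigma) (auto simp: finite_splits split_beta)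
  have right: "mps_mult f (mps_mult g h) I =
      (\<Sum>x \<in> Sigma {p. fst p + snd p = I} (\<lambda>p. {q. fst q + snd q = snd p}).
         f (fst (fst x)) * g (fst (snd x)) * h (snd (snd x)))"
    unfolding mps_mult_eq sum_distrib_left
    by (subst sum.Sigma) (auto simp: finite_splits split_beta mult.assoc)
  show "mps_mult (mps_mult f g) h I = mps_mult f (mps_mult g h) I"
    unfolding left right
    by (rule sum.reindex_bij_witness[where i="\<lambda>((A, Q), (B, C)). ((A + B, C), (A, B))"
          and j="\<lambda>((P, C), (A, B)). ((A, B + C), (B, C))"])
       (auto simp: add.assoc)
qed

lemma mps_mult_add_right:
  "mps_mult f (g + h) = mps_mult f g + mps_mult f (h :: ('n::finite, 'k::field) mps)"
  by (rule ext) (simp add: mps_mult_eq distrib_left sum.distrib)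

lemma mps_mult_monom_t:
  "mps_mult (monom_t E) f v = (if E \<le> v then f (v - E) else (0 :: 'k::field))"
proof -
  have "mps_mult (monom_t E) f v =
      (\<Sum>p | fst p + snd p = v. if p = (E, v - E) then f (v - E) else 0)"
    unfolding mps_mult_eq by (rule sum.cong) (auto simp: monom_t_def)
  also have "\<dots> = (if E \<le> v then f (v - E) else 0)"
  proof -
    have "(a + (b - a) = b) \<longleftrightarrow> a \<le> b" for a b :: nat
      by arith
    then have "E + (v - E) = v \<longleftrightarrow> E \<le> v"
      by (simp add: fun_eq_iff le_fun_def)
    then show ?thesis
      by (simp add: sum.delta' finite_splits)
  qed
  finally show ?thesis .
qed

lemma mps_mult_one [simp]: "mps_mult (monom_t 0) f = (f :: ('n::finite, 'k::field) mps)"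
  by (simp add: fun_eq_iff mps_mult_monom_t)

lemma mps_mult_monom_t_monom_t:
  "mps_mult (monom_t A) (monom_t B) = (monom_t (A + B) :: ('n::finite, 'k::field) mps)"
proof
  fix v
  show "mps_mult (monom_t A) (monom_t B) v = monom_t (A + B) v"
    unfolding mps_mult_monom_t by (auto simp: monom_t_def le_iff_add)
qed

lemma supp_mps_mult:
  "supp (mps_mult f g) \<subseteq> {A + B | A B. A \<in> supp f \<and> B \<in> supp (g :: ('n::finite, 'k::field) mps)}"
proof
  fix I assume "I \<in> supp (mps_mult f g)"
  then have "(\<Sum>p | fst p + snd p = I. f (fst p) * g (snd p)) \<noteq> 0"
    by (simp add: supp_def mps_mult_eq)
  then obtain p where "fst p + snd p = I" "f (fst p) * g (snd p) \<noteq> 0"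
    using sum.not_neutral_contains_not_neutral by blast
  then show "I \<in> {A + B | A B. A \<in> supp f \<and> B \<in> supp g}"
    by (auto simp: supp_def)
qed

lemma supp_monom_t [simp]: "supp (monom_t E) = {E}"
  by (auto simp: supp_def monom_t_def)

typedef ('n, 'k) ps = "UNIV :: ('n, 'k) mps set"
  morphisms ps_coeff Abs_ps by simp

declare Abs_ps_inverse [OF UNIV_I, simp] ps_coeff_inverse [simp]

instantiation ps :: (finite, field) comm_ring_1
begin
definition "0 = Abs_ps 0"
definition "1 = Abs_ps (monom_t 0)"
definition "a + b = Abs_ps (ps_coeff a + ps_coeff b)"
definition "- a = Abs_ps (- ps_coeff a)"
definition "a - b = Abs_ps (ps_coeff a - ps_coeff b)"
definition "a * b = Abs_ps (mps_mult (ps_coeff a) (ps_coeff b))"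
instance
proof
  fix a b c :: "('a, 'b) ps"
  show "a * b * c = a * (b * c)" by (simp add: times_ps_def mps_mult_assoc)
  show "a * b = b * a" by (simp add: times_ps_def mps_mult_commute)
  show "1 * a = a" by (simp add: times_ps_def one_ps_def)
  show "a + b + c = a + (b + c)" by (simp add: plus_ps_def add.assoc)
  show "a + b = b + a" by (simp add: plus_ps_def add.commute)
  show "0 + a = a" by (simp add: plus_ps_def zero_ps_def)
  show "- a + a = 0" by (simp add: plus_ps_def zero_ps_def uminus_ps_def)
  show "a - b = a + - b" by (simp add: plus_ps_def minus_ps_def uminus_ps_def)
  show "(a + b) * c = a * c + b * c"
    by (simp add: plus_ps_def times_ps_def mps_mult_commute[of _ "ps_coeff c"] mps_mult_add_right)
  show "(0 :: ('a, 'b) ps) \<noteq> 1"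
    by (metis Abs_ps_inverse UNIV_I monom_t_def one_ps_def zero_fun_apply zero_neq_one zero_ps_def)
qed
end

definition ps_monom :: "'n expo \<Rightarrow> ('n::finite, 'k::field) ps" where
  "ps_monom E = Abs_ps (monom_t E)"

lemma ps_coeff_zero [simp]: "ps_coeff 0 = 0"
  and ps_coeff_one [simp]: "ps_coeff 1 = monom_t 0"
  and ps_coeff_plus [simp]: "ps_coeff (x + y) = ps_coeff x + ps_coeff y"
  and ps_coeff_minus [simp]: "ps_coeff (x - y) = ps_coeff x - ps_coeff y"
  and ps_coeff_times [simp]: "ps_coeff (x * y) = mps_mult (ps_coeff x) (ps_coeff y)"
  and ps_coeff_monom [simp]: "ps_coeff (ps_monom E) = monom_t E"
  by (simp_all add: zero_ps_def one_ps_def plus_ps_def minus_ps_def times_ps_def ps_monom_def)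

lemma ps_eq_iff: "x = y \<longleftrightarrow> ps_coeff x = ps_coeff y"
  by (simp add: ps_coeff_inject)

lemma ps_eq_0_iff: "x = 0 \<longleftrightarrow> supp (ps_coeff x) = {}"
  by (auto simp: ps_eq_iff supp_def fun_eq_iff)

lemma ps_monom_mult: "ps_monom A * ps_monom B = (ps_monom (A + B) :: ('n::finite, 'k::field) ps)"
  by (simp add: ps_eq_iff mps_mult_monom_t_monom_t)

lemma ps_monom_0 [simp]: "ps_monom 0 = 1"
  by (simp add: ps_eq_iff)

section \<open>Lexicographic orders from weight vectors\<close>

fun lex_nonneg :: "(real ^ 'n) list \<Rightarrow> real ^ 'n \<Rightarrow> bool" where
  "lex_nonneg [] d = True"
| "lex_nonneg (w # ws) d = (0 < inner w d \<or> (inner w d = 0 \<and> lex_nonneg ws d))"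

lemma lex_nonneg_zero [simp]: "lex_nonneg ws 0"
  by (induction ws) auto

lemma lex_nonneg_add: "lex_nonneg ws d \<Longrightarrow> lex_nonneg ws e \<Longrightarrow> lex_nonneg ws (d + e)"
  by (induction ws) (auto simp: inner_add_right)

lemma lex_nonneg_scaleR_iff [simp]: "0 < c \<Longrightarrow> lex_nonneg ws (c *\<^sub>R d) \<longleftrightarrow> lex_nonneg ws d"
  by (induction ws) (auto simp: zero_less_mult_iff)

lemma lex_nonneg_scaleR: "0 \<le> c \<Longrightarrow> lex_nonneg ws d \<Longrightarrow> lex_nonneg ws (c *\<^sub>R d)"
  by (cases "c = 0") auto

lemma lex_nonneg_total: "lex_nonneg ws d \<or> lex_nonneg ws (- d)"
  by (induction ws) auto

lemma lex_nonneg_antisym: "lex_nonneg ws d \<Longrightarrow> lex_nonneg ws (- d) \<Longrightarrow> \<forall>w \<in> set ws. inner w d = 0"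
  by (induction ws) auto

lemma inner_nonneg_nonneg:
  fixes w d :: "real ^ 'n"
  shows "(\<forall>i. 0 \<le> w $ i) \<Longrightarrow> (\<forall>i. 0 \<le> d $ i) \<Longrightarrow> 0 \<le> inner w d"
  by (auto simp: inner_vec_def intro!: sum_nonneg)

lemma lex_nonneg_nonneg: "(\<forall>w \<in> set ws. \<forall>i. 0 \<le> w $ i) \<Longrightarrow> (\<forall>i. 0 \<le> d $ i) \<Longrightarrow> lex_nonneg ws d"
proof (induction ws)
  case (Cons w ws)
  then have "0 \<le> inner w d"
    by (simp add: inner_nonneg_nonneg)
  with Cons show ?case
    by auto
qed simp

text \<open>The unit vectors make the induced order on exponents antisymmetric, so that
  \<open>a # ws\<close> yields a monomial order refining the weight \<open>a\<close>.\<close>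

definition admissible_weights :: "(real ^ 'n) list \<Rightarrow> bool" where
  "admissible_weights ws \<longleftrightarrow> (\<forall>w \<in> set ws. \<forall>i. 0 \<le> w $ i) \<and> (\<forall>i. axis i 1 \<in> set ws)"

lemma admissible_weights_ConsE:
  fixes a :: "real ^ 'n::finite"
  assumes "\<forall>i. 0 \<le> a $ i"
  obtains ws where "admissible_weights (a # ws)"
proof -
  obtain ws where "set ws = range (\<lambda>i::'n. axis i (1::real))"
    using finite_list[of "range (\<lambda>i::'n. axis i (1::real))"] by auto
  then have "admissible_weights (a # ws)"
    using assms by (auto simp: admissible_weights_def axis_def)
  then show thesis ..
qed

lemma admissible_weights_lex_antisym:
  assumes "admissible_weights ws" "lex_nonneg ws d" "lex_nonneg ws (- d)"
  shows "d = 0"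
proof -
  have "d $ i = 0" for i
  proof -
    have "axis i 1 \<in> set ws"
      using assms(1) by (simp add: admissible_weights_def)
    then have "inner (axis i 1) d = 0"
      using lex_nonneg_antisym[OF assms(2,3)] by blast
    then show ?thesis
      by (simp add: inner_axis')
  qed
  then show ?thesis
    by (simp add: vec_eq_iff)
qed

lemma expo_emb_add: "expo_emb (A + B) = expo_emb A + expo_emb B"
  by (simp add: expo_emb_def vec_eq_iff)

lemma expo_emb_0 [simp]: "expo_emb 0 = 0"
  by (simp add: expo_emb_def vec_eq_iff)

lemma expo_emb_inject [simp]: "expo_emb A = expo_emb B \<longleftrightarrow> A = B"
  by (auto simp: expo_emb_def vec_eq_iff fun_eq_iff)

lemma expo_emb_nonneg: "0 \<le> expo_emb A $ i"
  by (simp add: expo_emb_def)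

lemma expo_emb_diff_nonneg: "A \<le> B \<Longrightarrow> 0 \<le> (expo_emb B - expo_emb A) $ i"
  by (simp add: expo_emb_def le_fun_def)

definition lex_le :: "(real ^ 'n) list \<Rightarrow> 'n::finite expo \<Rightarrow> 'n expo \<Rightarrow> bool" where
  "lex_le ws A B \<longleftrightarrow> lex_nonneg ws (expo_emb B - expo_emb A)"

lemma lex_le_refl [simp]: "lex_le ws A A"
  by (simp add: lex_le_def)

lemma lex_le_add_mono: "lex_le ws A B \<Longrightarrow> lex_le ws C D \<Longrightarrow> lex_le ws (A + C) (B + D)"
  unfolding lex_le_def expo_emb_add by (drule (1) lex_nonneg_add) (simp add: algebra_simps)

lemma lex_le_add_right_cancel [simp]: "lex_le ws (A + C) (B + C) \<longleftrightarrow> lex_le ws A B"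
  by (simp add: lex_le_def expo_emb_add)

lemma lex_le_total: "lex_le ws A B \<or> lex_le ws B A"
  unfolding lex_le_def using lex_nonneg_total[of ws "expo_emb B - expo_emb A"] by simp

lemma lex_le_antisym: "admissible_weights ws \<Longrightarrow> lex_le ws A B \<Longrightarrow> lex_le ws B A \<Longrightarrow> A = B"
  unfolding lex_le_def using admissible_weights_lex_antisym[of ws "expo_emb B - expo_emb A"] by simp

lemma lex_le_Cons_imp_inner_le: "lex_le (w # ws) A B \<Longrightarrow> inner w (expo_emb A) \<le> inner w (expo_emb B)"
  by (auto simp: lex_le_def inner_diff_right)

definition lex_least :: "(real ^ 'n) list \<Rightarrow> 'n::finite expo set \<Rightarrow> 'n expo \<Rightarrow> bool" where
  "lex_least ws S v \<longleftrightarrow> v \<in> S \<and> (\<forall>s \<in> S. lex_le ws v s)"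

section \<open>Newton polyhedra\<close>

text \<open>Points with a large \<open>d\<close>-th entry are dominated by a finite set chosen for the
  coordinates in \<open>D\<close>; each of the finitely many remaining layers \<open>s d = k\<close> gets its own.\<close>

lemma dickson_lemma_insert:
  fixes S :: "'n expo set"
  assumes IH: "\<And>S :: 'n expo set. \<exists>F. finite F \<and> F \<subseteq> S \<and> (\<forall>s \<in> S. \<exists>f \<in> F. \<forall>i \<in> D. f i \<le> s i)"
  shows "\<exists>F. finite F \<and> F \<subseteq> S \<and> (\<forall>s \<in> S. \<exists>f \<in> F. \<forall>i \<in> insert d D. f i \<le> s i)"
proof -
  obtain F0 where F0: "finite F0" "F0 \<subseteq> S" "\<forall>s \<in> S. \<exists>f \<in> F0. \<forall>i \<in> D. f i \<le> s i"
    using IH[of S] by blast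
  have "\<forall>k. \<exists>G. finite G \<and> G \<subseteq> {s \<in> S. s d = k} \<and>
      (\<forall>s \<in> {s \<in> S. s d = k}. \<exists>f \<in> G. \<forall>i \<in> D. f i \<le> s i)"
    by (intro allI IH)
  from choice[OF this] obtain G where G: "\<forall>k. finite (G k) \<and> G k \<subseteq> {s \<in> S. s d = k} \<and>
      (\<forall>s \<in> {s \<in> S. s d = k}. \<exists>f \<in> G k. \<forall>i \<in> D. f i \<le> s i)"
    by blast
  define N where "N = (\<Sum>f \<in> F0. f d)"
  define F where "F = F0 \<union> (\<Union>k < N. G k)"
  have "\<exists>f \<in> F. \<forall>i \<in> insert d D. f i \<le> s i" if s: "s \<in> S" for s
  proof (cases "N \<le> s d")
    case True
    obtain f where f: "f \<in> F0" "\<forall>i \<in> D. f i \<le> s i"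
      using F0(3) s by blast
    have "f d \<le> N"
      unfolding N_def using f(1) F0(1) by (intro member_le_sum) auto
    then have "\<forall>i \<in> insert d D. f i \<le> s i"
      using f(2) True by auto
    moreover have "f \<in> F"
      using f(1) by (simp add: F_def)
    ultimately show ?thesis
      by blast
  next
    case False
    obtain f where f: "f \<in> G (s d)" "\<forall>i \<in> D. f i \<le> s i"
      using G s by blast
    have "f d = s d"
      using G f(1) by blast
    then have "\<forall>i \<in> insert d D. f i \<le> s i"
      using f(2) by simp
    moreover have "f \<in> F"
      using f(1) False by (auto simp: F_def)
    ultimately show ?thesis
      by blast
  qed
  moreover have "finite F" "F \<subseteq> S"
    using F0 G by (auto simp: F_def)
  ultimately show ?thesis
    by blast
qed

lemma dickson_lemma_on:
  fixes D :: "'n set" and S :: "'n expo set"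
  assumes "finite D"
  shows "\<exists>F. finite F \<and> F \<subseteq> S \<and> (\<forall>s \<in> S. \<exists>f \<in> F. \<forall>i \<in> D. f i \<le> s i)"
  using assms
proof (induction D arbitrary: S)
  case empty
  show ?case
    using someI[of "\<lambda>s. s \<in> S"] by (intro exI[of _ "S \<inter> {SOME s. s \<in> S}"]) auto
next
  case (insert d D)
  show ?case
    by (rule dickson_lemma_insert[OF insert.IH])
qed

lemma dickson_lemma:
  fixes S :: "'n::finite expo set"
  obtains F where "finite F" "F \<subseteq> S" "\<forall>s \<in> S. \<exists>f \<in> F. f \<le> s"
  using dickson_lemma_on[OF finite_class.finite_UNIV, of S] by (auto simp: le_fun_def)

lemma nonneg_weight_attains_min:
  fixes S :: "'n::finite expo set"
  assumes w: "\<forall>i. 0 \<le> w $ i" and "S \<noteq> {}"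
  shows "\<exists>v \<in> S. \<forall>s \<in> S. inner w (expo_emb v) \<le> inner w (expo_emb s)"
proof -
  obtain F where F: "finite F" "F \<subseteq> S" "\<forall>s \<in> S. \<exists>f \<in> F. f \<le> s"
    by (rule dickson_lemma)
  then have "F \<noteq> {}"
    using \<open>S \<noteq> {}\<close> by blast
  define v where "v = arg_min_on (\<lambda>f. inner w (expo_emb f)) F"
  have v: "v \<in> F" "\<forall>f \<in> F. inner w (expo_emb v) \<le> inner w (expo_emb f)"
    using arg_min_if_finite[OF F(1) \<open>F \<noteq> {}\<close>, of "\<lambda>f. inner w (expo_emb f)"]
    unfolding v_def by (auto simp: not_less)
  have "inner w (expo_emb v) \<le> inner w (expo_emb s)" if s: "s \<in> S" for s
  proof -
    obtain f where f: "f \<in> F" "f \<le> s"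
      using F(3) s by auto
    have "\<forall>i. 0 \<le> (expo_emb s - expo_emb f) $ i"
      by (intro allI expo_emb_diff_nonneg f(2))
    then have "0 \<le> inner w (expo_emb s - expo_emb f)"
      using w inner_nonneg_nonneg by blast
    then show ?thesis
      using v f(1) by (force simp: inner_diff_right)
  qed
  then show ?thesis
    using v F(2) by blast
qed

lemma lex_least_exists:
  fixes S :: "'n::finite expo set"
  assumes "\<forall>w \<in> set ws. \<forall>i. 0 \<le> w $ i" and "S \<noteq> {}"
  shows "\<exists>v. lex_least ws S v"
  using assms
proof (induction ws arbitrary: S)
  case Nil
  then show ?case
    by (auto simp: lex_least_def lex_le_def)
next
  case (Cons w ws)
  obtain v0 where v0: "v0 \<in> S" "\<forall>s \<in> S. inner w (expo_emb v0) \<le> inner w (expo_emb s)"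
    using nonneg_weight_attains_min[of w S] Cons.prems by auto
  define S' where "S' = {s \<in> S. inner w (expo_emb s) = inner w (expo_emb v0)}"
  obtain v where v: "lex_least ws S' v"
    using Cons.IH[of S'] Cons.prems v0(1) unfolding S'_def by auto
  have "lex_le (w # ws) v s" if "s \<in> S" for s
    using v v0(2) that unfolding lex_least_def lex_le_def S'_def
    by (auto simp: inner_diff_right less_le)
  then show ?case
    using v by (auto simp: lex_least_def S'_def)
qed

lemma newton_polyhedron_eq_sums:
  "newton_polyhedron S = (\<Union>x \<in> convex hull (expo_emb ` S). \<Union>y \<in> {y. \<forall>i. 0 \<le> y $ i}. {x + y})"
  unfolding newton_polyhedron_def by blast

lemma convex_newton_polyhedron: "convex (newton_polyhedron S)"
  unfolding newton_polyhedron_eq_sums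
  by (intro convex_sums convex_convex_hull) (auto simp: convex_def intro!: add_nonneg_nonneg)

lemma expo_emb_mem_newton_polyhedron: "s \<in> S \<Longrightarrow> expo_emb s \<in> newton_polyhedron S"
  unfolding newton_polyhedron_def
  by (intro CollectI exI[of _ "expo_emb s"] exI[of _ 0]) (auto intro: hull_inc)

lemma newton_polyhedron_add_nonneg:
  assumes "x \<in> newton_polyhedron S" "\<forall>i. 0 \<le> y $ i"
  shows "x + y \<in> newton_polyhedron S"
proof -
  obtain c z where "x = c + z" "c \<in> convex hull (expo_emb ` S)" "\<forall>i. 0 \<le> z $ i"
    using assms(1) by (auto simp: newton_polyhedron_def)
  then show ?thesis
    unfolding newton_polyhedron_def using assms(2)
    by (intro CollectI exI[of _ c] exI[of _ "z + y"]) (auto simp: add.assoc)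
qed

lemma newton_polyhedron_subset_iff:
  "newton_polyhedron A \<subseteq> newton_polyhedron B \<longleftrightarrow> expo_emb ` A \<subseteq> newton_polyhedron B"
proof
  assume "newton_polyhedron A \<subseteq> newton_polyhedron B"
  then show "expo_emb ` A \<subseteq> newton_polyhedron B"
    using expo_emb_mem_newton_polyhedron by blast
next
  assume "expo_emb ` A \<subseteq> newton_polyhedron B"
  then have "convex hull (expo_emb ` A) \<subseteq> newton_polyhedron B"
    using convex_newton_polyhedron by (rule hull_minimal)
  then show "newton_polyhedron A \<subseteq> newton_polyhedron B"
    by (auto simp: newton_polyhedron_def[of A] intro: newton_polyhedron_add_nonneg)
qed

lemma newton_polyhedron_empty [simp]: "newton_polyhedron {} = {}"
  by (simp add: newton_polyhedron_def)

lemma newton_polyhedron_mono: "A \<subseteq> B \<Longrightarrow> newton_polyhedron A \<subseteq> newton_polyhedron B"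
  unfolding newton_polyhedron_subset_iff by (auto intro: expo_emb_mem_newton_polyhedron)

text \<open>By Dickson's lemma the polyhedron is generated by finitely many points, hence closed.\<close>

lemma closed_newton_polyhedron: "closed (newton_polyhedron (S :: 'n::finite expo set))"
proof -
  obtain F where F: "finite F" "F \<subseteq> S" "\<forall>s \<in> S. \<exists>f \<in> F. f \<le> s"
    by (rule dickson_lemma)
  have "expo_emb s \<in> newton_polyhedron F" if s: "s \<in> S" for s
  proof -
    obtain f where "f \<in> F" "f \<le> s"
      using F(3) s by auto
    then have "expo_emb f + (expo_emb s - expo_emb f) \<in> newton_polyhedron F"
      by (intro newton_polyhedron_add_nonneg expo_emb_mem_newton_polyhedron allI
          expo_emb_diff_nonneg)
    then show ?thesis
      by simp
  qed
  then have "newton_polyhedron S \<subseteq> newton_polyhedron F"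
    unfolding newton_polyhedron_subset_iff by blast
  then have "newton_polyhedron S = newton_polyhedron F"
    using newton_polyhedron_mono[OF F(2)] by blast
  moreover have "closed (newton_polyhedron F)"
    unfolding newton_polyhedron_eq_sums
  proof (rule compact_closed_sums)
    show "compact (convex hull (expo_emb ` F))"
      using F(1) by (intro compact_convex_hull finite_imp_compact finite_imageI)
    show "closed {y :: real ^ 'n. \<forall>i. 0 \<le> y $ i}"
      by (intro closed_Collect_all) (simp add: closed_halfspace_component_ge_cart)
  qed
  ultimately show ?thesis
    by simp
qed

text \<open>The polyhedron is closed under adding the positive orthant, so a separating normal
  with a negative entry would make the linear form unbounded below on it.\<close>

lemma newton_polyhedron_separation:
  fixes S :: "'n::finite expo set"
  assumes z: "z \<notin> newton_polyhedron S"
  obtains a where "\<forall>i. 0 \<le> a $ i" "\<forall>x \<in> newton_polyhedron S. inner a z < inner a x"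
proof (cases "newton_polyhedron S = {}")
  case True
  then show thesis
    using that[of 0] by simp
next
  case False
  then obtain x0 where x0: "x0 \<in> newton_polyhedron S"
    by blast
  obtain a b where ab: "inner a z < b" "\<forall>x \<in> newton_polyhedron S. b < inner a x"
    using separating_hyperplane_closed_point[OF convex_newton_polyhedron closed_newton_polyhedron z]
    by blast
  have "0 \<le> a $ i" for i
  proof (rule ccontr)
    assume "\<not> 0 \<le> a $ i"
    define t where "t = (inner a x0 - b) / - a $ i"
    have "b < inner a x0"
      using ab(2) x0 by blast
    then have "0 \<le> t"
      unfolding t_def using \<open>\<not> 0 \<le> a $ i\<close> by (intro divide_nonneg_pos) auto
    then have "x0 + t *\<^sub>R axis i 1 \<in> newton_polyhedron S"
      using x0 by (intro newton_polyhedron_add_nonneg) (auto simp: axis_def)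
    moreover have "inner a (x0 + t *\<^sub>R axis i 1) = inner a x0 + t * a $ i"
      by (simp add: inner_add_right inner_axis)
    moreover have "inner a x0 + t * a $ i = b"
      using \<open>\<not> 0 \<le> a $ i\<close> by (simp add: t_def)
    ultimately show False
      using ab(2) by fastforce
  qed
  then show thesis
    using that ab by fastforce
qed

lemma separating_admissible_weights:
  fixes S :: "'n::finite expo set"
  assumes "z \<notin> newton_polyhedron S"
  obtains a ws where "admissible_weights (a # ws)" "\<forall>x \<in> newton_polyhedron S. inner a z < inner a x"
  using newton_polyhedron_separation[OF assms] admissible_weights_ConsE by metis

lemma lex_least_newton_polyhedron:
  assumes ws: "\<forall>w \<in> set ws. \<forall>i. 0 \<le> w $ i" and v: "lex_least ws S v"
    and x: "x \<in> newton_polyhedron S"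
  shows "lex_nonneg ws (x - expo_emb v)"
proof -
  define Q where "Q = {x. lex_nonneg ws (x - expo_emb v)}"
  have "convex Q"
    unfolding convex_def Q_def
  proof (intro ballI allI impI, simp)
    fix x y :: "real ^ 'a" and u u' :: real
    assume "lex_nonneg ws (x - expo_emb v)" "lex_nonneg ws (y - expo_emb v)"
      and "0 \<le> u" "0 \<le> u'" "u + u' = 1"
    moreover have
      "u *\<^sub>R x + u' *\<^sub>R y - expo_emb v = u *\<^sub>R (x - expo_emb v) + u' *\<^sub>R (y - expo_emb v)"
      using \<open>u + u' = 1\<close> by (simp add: algebra_simps flip: scaleR_add_left)
    ultimately show "lex_nonneg ws (u *\<^sub>R x + u' *\<^sub>R y - expo_emb v)"
      by (simp add: lex_nonneg_add lex_nonneg_scaleR)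
  qed
  moreover have "expo_emb ` S \<subseteq> Q"
    using v by (auto simp: Q_def lex_least_def lex_le_def)
  ultimately have "convex hull (expo_emb ` S) \<subseteq> Q"
    by (rule hull_minimal[rotated])
  moreover obtain c z where "x = c + z" "c \<in> convex hull (expo_emb ` S)" "\<forall>i. 0 \<le> z $ i"
    using x by (auto simp: newton_polyhedron_def)
  ultimately show ?thesis
    using lex_nonneg_add[of ws "c - expo_emb v" z] lex_nonneg_nonneg[OF ws]
    by (auto simp: Q_def algebra_simps)
qed

lemma lex_least_mem_newton_vertices:
  assumes ws: "admissible_weights ws" and v: "lex_least ws S v"
  shows "v \<in> newton_vertices S"
proof -
  have nonneg: "\<forall>w \<in> set ws. \<forall>i. 0 \<le> w $ i"
    using ws by (simp add: admissible_weights_def)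
  let ?e = "expo_emb v"
  have "?e \<notin> open_segment p q" if "p \<in> newton_polyhedron S" "q \<in> newton_polyhedron S" for p q
  proof
    assume "?e \<in> open_segment p q"
    then obtain u where "p \<noteq> q" "0 < u" "u < 1" and e: "?e = (1 - u) *\<^sub>R p + u *\<^sub>R q"
      unfolding in_segment(2) by blast
    have "p - ?e = u *\<^sub>R (p - q)" "q - ?e = (1 - u) *\<^sub>R (- (p - q))"
      using e by (simp_all add: algebra_simps)
    moreover have "lex_nonneg ws (p - ?e)" "lex_nonneg ws (q - ?e)"
      using lex_least_newton_polyhedron[OF nonneg v] that by blast+
    ultimately have "lex_nonneg ws (p - q)" "lex_nonneg ws (- (p - q))"
      using \<open>0 < u\<close> \<open>u < 1\<close> by simp_all
    then have "p - q = 0"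
      by (rule admissible_weights_lex_antisym[OF ws])
    then show False
      using \<open>p \<noteq> q\<close> by simp
  qed
  moreover have "?e \<in> newton_polyhedron S"
    using v by (simp add: lex_least_def expo_emb_mem_newton_polyhedron)
  ultimately show ?thesis
    by (simp add: newton_vertices_def extreme_point_of_def)
qed

lemma expo_emb_newton_vertices_subset: "expo_emb ` newton_vertices S \<subseteq> newton_polyhedron S"
  by (auto simp: newton_vertices_def extreme_point_of_def)

lemma newton_polyhedron_newton_vertices [simp]:
  "newton_polyhedron (newton_vertices S) = newton_polyhedron (S :: 'n::finite expo set)"
proof
  show "newton_polyhedron (newton_vertices S) \<subseteq> newton_polyhedron S"
    unfolding newton_polyhedron_subset_iff by (rule expo_emb_newton_vertices_subset)
  show "newton_polyhedron S \<subseteq> newton_polyhedron (newton_vertices S)"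
    unfolding newton_polyhedron_subset_iff
  proof (rule image_subsetI, rule ccontr)
    fix s
    assume s: "s \<in> S" and "expo_emb s \<notin> newton_polyhedron (newton_vertices S)"
    from this(2) obtain a ws where ws: "admissible_weights (a # ws)"
      and sep: "\<forall>x \<in> newton_polyhedron (newton_vertices S). inner a (expo_emb s) < inner a x"
      by (rule separating_admissible_weights)
    obtain v where v: "lex_least (a # ws) S v"
      using lex_least_exists[of "a # ws" S] ws s by (auto simp: admissible_weights_def)
    then have "expo_emb v \<in> newton_polyhedron (newton_vertices S)"
      by (intro expo_emb_mem_newton_polyhedron lex_least_mem_newton_vertices[OF ws])
    moreover have "inner a (expo_emb v) \<le> inner a (expo_emb s)"
      using v s by (auto simp: lex_least_def intro: lex_le_Cons_imp_inner_le)
    ultimately show False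
      using sep by fastforce
  qed
qed

lemma newton_vertices_eq_iff:
  "newton_vertices A = newton_vertices B \<longleftrightarrow>
    newton_polyhedron A = newton_polyhedron (B :: 'n::finite expo set)"
  by (metis newton_polyhedron_newton_vertices newton_vertices_def)

lemma newton_polyhedron_Un_newton_vertices [simp]:
  "newton_polyhedron (newton_vertices A \<union> B) = newton_polyhedron (A \<union> (B :: 'n::finite expo set))"
  "newton_polyhedron (B \<union> newton_vertices A) = newton_polyhedron (B \<union> A)"
proof -
  have "expo_emb ` newton_vertices A \<subseteq> newton_polyhedron (A \<union> B)"
    using expo_emb_newton_vertices_subset[of A] newton_polyhedron_mono[of A "A \<union> B"] by blast
  moreover have "expo_emb ` A \<subseteq> newton_polyhedron (newton_vertices A \<union> B)"
    using newton_polyhedron_mono[of "newton_vertices A" "newton_vertices A \<union> B"]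
    by (auto intro: expo_emb_mem_newton_polyhedron)
  ultimately show "newton_polyhedron (newton_vertices A \<union> B) = newton_polyhedron (A \<union> B)"
    by (intro subset_antisym)
       (auto simp: newton_polyhedron_subset_iff intro: expo_emb_mem_newton_polyhedron)
  then show "newton_polyhedron (B \<union> newton_vertices A) = newton_polyhedron (B \<union> A)"
    by (simp add: Un_commute)
qed

lemma newton_polyhedron_Un_eq_iff:
  "newton_polyhedron (A \<union> B) = newton_polyhedron B \<longleftrightarrow> expo_emb ` A \<subseteq> newton_polyhedron B"
proof
  assume "newton_polyhedron (A \<union> B) = newton_polyhedron B"
  then show "expo_emb ` A \<subseteq> newton_polyhedron B"
    using newton_polyhedron_subset_iff[of "A \<union> B" B] by auto
next
  assume "expo_emb ` A \<subseteq> newton_polyhedron B"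
  then have "newton_polyhedron (A \<union> B) \<subseteq> newton_polyhedron B"
    by (auto simp: newton_polyhedron_subset_iff intro: expo_emb_mem_newton_polyhedron)
  then show "newton_polyhedron (A \<union> B) = newton_polyhedron B"
    using newton_polyhedron_mono[of B "A \<union> B"] by blast
qed

lemma vb_times_one [simp]: "vb_times a vb_one = newton_vertices a"
proof -
  have "{A + B | A B. A \<in> a \<and> B \<in> vb_one} = a"
    by (auto simp: vb_one_def)
  then show ?thesis
    by (simp add: vb_times_def)
qed

lemma vb_frac_le_one_iff:
  "vb_frac_le (trop f, trop g) (vb_one, vb_one) \<longleftrightarrow>
    expo_emb ` supp f \<subseteq> newton_polyhedron (supp (g :: ('n::finite, 'k::field) mps))"
proof -
  have "vb_frac_le (trop f, trop g) (vb_one, vb_one) \<longleftrightarrow>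
      newton_vertices (newton_vertices (newton_vertices (supp f)) \<union>
        newton_vertices (newton_vertices (supp g))) = newton_vertices (newton_vertices (supp g))"
    by (simp add: vb_frac_le_def vb_plus_def trop_def)
  also have "\<dots> \<longleftrightarrow> newton_polyhedron (supp f \<union> supp g) = newton_polyhedron (supp g)"
    by (simp add: newton_vertices_eq_iff)
  also have "\<dots> \<longleftrightarrow> expo_emb ` supp f \<subseteq> newton_polyhedron (supp g)"
    by (rule newton_polyhedron_Un_eq_iff)
  finally show ?thesis .
qed

section \<open>Leading exponents and fractions of power series\<close>

lemma lex_least_supp_mps_mult:
  fixes f g :: "('n::finite, 'k::field) mps"
  assumes ws: "admissible_weights ws"
    and vf: "lex_least ws (supp f) vf" and vg: "lex_least ws (supp g) vg"
  shows "mps_mult f g (vf + vg) = f vf * g vg"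
    and "lex_least ws (supp (mps_mult f g)) (vf + vg)"
proof -
  have off_diagonal: "f A * g B = 0" if "A + B = vf + vg" "(A, B) \<noteq> (vf, vg)" for A B
  proof (rule ccontr)
    assume "f A * g B \<noteq> 0"
    then have "lex_le ws vf A" "lex_le ws vg B"
      using vf vg by (auto simp: lex_least_def supp_def)
    then have "lex_le ws (A + vg) (vf + vg)"
      using lex_le_add_mono[of ws A A vg B] that(1) by simp
    then have "A = vf"
      using lex_le_antisym[OF ws] \<open>lex_le ws vf A\<close> by simp
    then show False
      using that by simp
  qed
  have "mps_mult f g (vf + vg) =
      (\<Sum>p | fst p + snd p = vf + vg. if p = (vf, vg) then f vf * g vg else 0)"
    unfolding mps_mult_eq
  proof (rule sum.cong[OF refl])
    fix p
    assume "p \<in> {p. fst p + snd p = vf + vg}"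
    then show "f (fst p) * g (snd p) = (if p = (vf, vg) then f vf * g vg else 0)"
      using off_diagonal[of "fst p" "snd p"] by (cases p) auto
  qed
  then show lead: "mps_mult f g (vf + vg) = f vf * g vg"
    by (simp add: sum.delta' finite_splits)
  show "lex_least ws (supp (mps_mult f g)) (vf + vg)"
    unfolding lex_least_def
  proof
    show "vf + vg \<in> supp (mps_mult f g)"
      using lead vf vg by (simp add: lex_least_def supp_def)
    show "\<forall>s \<in> supp (mps_mult f g). lex_le ws (vf + vg) s"
      using supp_mps_mult[of f g] vf vg by (fastforce simp: lex_least_def intro: lex_le_add_mono)
  qed
qed

instance ps :: (finite, field) idom
proof
  fix x y :: "('a, 'b) ps"
  assume "x \<noteq> 0" "y \<noteq> 0"
  obtain ws :: "(real ^ 'a) list" where ws: "admissible_weights (0 # ws)"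
    using admissible_weights_ConsE[of 0] by auto
  then obtain vx vy where vx: "lex_least (0 # ws) (supp (ps_coeff x)) vx"
    and vy: "lex_least (0 # ws) (supp (ps_coeff y)) vy"
    using lex_least_exists \<open>x \<noteq> 0\<close> \<open>y \<noteq> 0\<close> by (metis admissible_weights_def ps_eq_0_iff)
  have "ps_coeff (x * y) (vx + vy) = ps_coeff x vx * ps_coeff y vy"
    using lex_least_supp_mps_mult(1)[OF ws vx vy] by simp
  also have "\<dots> \<noteq> 0"
    using vx vy by (simp add: lex_least_def supp_def)
  finally show "x * y \<noteq> 0"
    by (metis ps_coeff_zero zero_fun_apply)
qed

type_synonym ('n, 'k) laurent = "(('n, 'k) mps \<times> ('n, 'k) mps) set"

definition frac_of :: "('n::finite, 'k::field) ps \<Rightarrow> ('n, 'k) ps \<Rightarrow> ('n, 'k) laurent" where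
  "frac_of x y = frac_class (ps_coeff x) (ps_coeff y)"

lemma mem_frac_of: "(ps_coeff p, ps_coeff q) \<in> frac_of x y \<longleftrightarrow> q \<noteq> 0 \<and> x * q = p * y"
  by (simp add: frac_of_def frac_class_def ps_eq_iff)

lemma frac_of_eq_iff:
  fixes x y :: "('n::finite, 'k::field) ps"
  assumes "y \<noteq> 0" "y' \<noteq> 0"
  shows "frac_of x y = frac_of x' y' \<longleftrightarrow> x * y' = x' * y"
proof
  assume "frac_of x y = frac_of x' y'"
  moreover have "(ps_coeff x, ps_coeff y) \<in> frac_of x y"
    using assms(1) by (simp add: mem_frac_of)
  ultimately show "x * y' = x' * y"
    by (simp add: mem_frac_of)
next
  assume e: "x * y' = x' * y"
  have cross: "x * q = p * y \<longleftrightarrow> x' * q = p * y'" for p q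
  proof -
    have "x * q = p * y \<longleftrightarrow> x * q * y' = p * y * y'"
      using assms(2) by simp
    also have "\<dots> \<longleftrightarrow> x' * q * y = p * y' * y"
      using e by (simp add: ac_simps)
    also have "\<dots> \<longleftrightarrow> x' * q = p * y'"
      using assms(1) by simp
    finally show ?thesis .
  qed
  show "frac_of x y = frac_of x' y'"
  proof (rule Set.set_eqI)
    fix pq :: "('n, 'k) mps \<times> ('n, 'k) mps"
    obtain a b where "pq = (ps_coeff (Abs_ps a), ps_coeff (Abs_ps b))"
      by (cases pq) simp
    then show "pq \<in> frac_of x y \<longleftrightarrow> pq \<in> frac_of x' y'"
      using cross by (simp only: mem_frac_of)
  qed
qed

lemma frac_rep_frac_of:
  assumes "y \<noteq> 0"
  obtains x0 y0 where "frac_rep (frac_of x y) = (ps_coeff x0, ps_coeff y0)"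
    "y0 \<noteq> 0" "x * y0 = x0 * y"
proof -
  have "(ps_coeff x, ps_coeff y) \<in> frac_of x y"
    using assms by (simp add: mem_frac_of)
  then have "frac_rep (frac_of x y) \<in> frac_of x y"
    unfolding frac_rep_def by (rule someI)
  moreover obtain x0 y0 where "frac_rep (frac_of x y) = (ps_coeff x0, ps_coeff y0)"
    by (metis Abs_ps_inverse UNIV_I prod.exhaust)
  ultimately show ?thesis
    using that by (simp add: mem_frac_of)
qed

lemma frac_add_frac_of:
  assumes "y \<noteq> 0" "y' \<noteq> 0"
  shows "frac_add (frac_of x y) (frac_of x' y') = frac_of (x * y' + x' * y) (y * y')"
proof -
  obtain x0 y0 where r: "frac_rep (frac_of x y) = (ps_coeff x0, ps_coeff y0)"
    "y0 \<noteq> 0" "x * y0 = x0 * y"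
    using frac_rep_frac_of[OF assms(1)] .
  obtain x1 y1 where r': "frac_rep (frac_of x' y') = (ps_coeff x1, ps_coeff y1)"
    "y1 \<noteq> 0" "x' * y1 = x1 * y'"
    using frac_rep_frac_of[OF assms(2)] .
  have "frac_add (frac_of x y) (frac_of x' y') = frac_of (x0 * y1 + x1 * y0) (y0 * y1)"
    unfolding frac_add_def r r' by (simp add: frac_of_def)
  also have "\<dots> = frac_of (x * y' + x' * y) (y * y')"
  proof (subst frac_of_eq_iff)
    show "y0 * y1 \<noteq> 0" "y * y' \<noteq> 0"
      using r r' assms by auto
    have "(x0 * y1 + x1 * y0) * (y * y') = (x0 * y) * (y1 * y') + (x1 * y') * (y0 * y)"
      by (simp add: algebra_simps)
    also have "\<dots> = (x * y0) * (y1 * y') + (x' * y1) * (y0 * y)"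
      using r r' by simp
    also have "\<dots> = (x * y' + x' * y) * (y0 * y1)"
      by (simp add: algebra_simps)
    finally show "(x0 * y1 + x1 * y0) * (y * y') = (x * y' + x' * y) * (y0 * y1)" .
  qed
  finally show ?thesis .
qed

lemma frac_mult_frac_of:
  assumes "y \<noteq> 0" "y' \<noteq> 0"
  shows "frac_mult (frac_of x y) (frac_of x' y') = frac_of (x * x') (y * y')"
proof -
  obtain x0 y0 where r: "frac_rep (frac_of x y) = (ps_coeff x0, ps_coeff y0)"
    "y0 \<noteq> 0" "x * y0 = x0 * y"
    using frac_rep_frac_of[OF assms(1)] .
  obtain x1 y1 where r': "frac_rep (frac_of x' y') = (ps_coeff x1, ps_coeff y1)"
    "y1 \<noteq> 0" "x' * y1 = x1 * y'"
    using frac_rep_frac_of[OF assms(2)] .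
  have "frac_mult (frac_of x y) (frac_of x' y') = frac_of (x0 * x1) (y0 * y1)"
    unfolding frac_mult_def r r' by (simp add: frac_of_def)
  also have "\<dots> = frac_of (x * x') (y * y')"
  proof (subst frac_of_eq_iff)
    show "y0 * y1 \<noteq> 0" "y * y' \<noteq> 0"
      using r r' assms by auto
    have "(x0 * x1) * (y * y') = (x0 * y) * (x1 * y')"
      by (simp add: algebra_simps)
    also have "\<dots> = (x * x') * (y0 * y1)"
      using r r' by (simp add: algebra_simps)
    finally show "(x0 * x1) * (y * y') = (x * x') * (y0 * y1)" .
  qed
  finally show ?thesis .
qed

lemma frac_one_eq: "frac_one = frac_of 1 1"
  by (simp add: frac_one_def frac_of_def)

lemma laurent_circ_iff:
  "X \<in> laurent_circ \<longleftrightarrow> (\<exists>x y. y \<noteq> 0 \<and> X = frac_of x y \<and>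
      expo_emb ` supp (ps_coeff x) \<subseteq> newton_polyhedron (supp (ps_coeff y)))"
proof
  assume "X \<in> laurent_circ"
  then obtain f g f' g' where X: "X = frac_class f g" "g \<noteq> 0" and fg': "(f', g') \<in> X"
    and le: "vb_frac_le (trop f', trop g') (vb_one, vb_one)"
    by (auto simp: laurent_circ_def laurent_field_def)
  have X': "X = frac_of (Abs_ps f) (Abs_ps g)" "Abs_ps g \<noteq> 0"
    using X by (simp_all add: frac_of_def ps_eq_iff)
  have "(ps_coeff (Abs_ps f'), ps_coeff (Abs_ps g')) \<in> frac_of (Abs_ps f) (Abs_ps g)"
    using fg' X' by simp
  then have "Abs_ps g' \<noteq> 0" "Abs_ps f * Abs_ps g' = Abs_ps f' * Abs_ps g"
    unfolding mem_frac_of by simp_all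
  then have "Abs_ps g' \<noteq> 0" "X = frac_of (Abs_ps f') (Abs_ps g')"
    using X' by (simp_all add: frac_of_eq_iff)
  moreover have
    "expo_emb ` supp (ps_coeff (Abs_ps f')) \<subseteq> newton_polyhedron (supp (ps_coeff (Abs_ps g')))"
    using le by (simp add: vb_frac_le_one_iff)
  ultimately show "\<exists>x y. y \<noteq> 0 \<and> X = frac_of x y \<and>
      expo_emb ` supp (ps_coeff x) \<subseteq> newton_polyhedron (supp (ps_coeff y))"
    by blast
next
  assume "\<exists>x y. y \<noteq> 0 \<and> X = frac_of x y \<and>
      expo_emb ` supp (ps_coeff x) \<subseteq> newton_polyhedron (supp (ps_coeff y))"
  then obtain x y where "y \<noteq> 0" "X = frac_of x y"
    "expo_emb ` supp (ps_coeff x) \<subseteq> newton_polyhedron (supp (ps_coeff y))"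
    by blast
  moreover have "(ps_coeff x, ps_coeff y) \<in> X"
    using calculation by (simp add: mem_frac_of)
  ultimately show "X \<in> laurent_circ"
    by (auto simp: laurent_circ_def laurent_field_def vb_frac_le_one_iff frac_of_def ps_eq_iff)
qed

lemma frac_of_mem_laurent_circI:
  "y \<noteq> 0 \<Longrightarrow> expo_emb ` supp (ps_coeff x) \<subseteq> newton_polyhedron (supp (ps_coeff y)) \<Longrightarrow>
    frac_of x y \<in> laurent_circ"
  by (auto simp: laurent_circ_iff)

lemma laurent_circ_ring_simps [simp]:
  "carrier laurent_circ_ring = laurent_circ"
  "monoid.mult laurent_circ_ring = frac_mult"
  "one laurent_circ_ring = frac_one"
  "zero laurent_circ_ring = frac_zero"
  "add laurent_circ_ring = frac_add"
  by (simp_all add: laurent_circ_ring_def)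

lemma supp_binomial:
  assumes "I \<noteq> J"
  shows "supp (ps_coeff (ps_monom I + ps_monom J :: ('n::finite, 'k::field) ps)) = {I, J}"
    and "ps_coeff (ps_monom I + ps_monom J :: ('n, 'k) ps) I = 1"
  using assms by (auto simp: supp_def monom_t_def)

text \<open>If \<open>I\<close> precedes \<open>J\<close>, the leading term of \<open>G\<close> is \<open>t^(2 I)\<close> times that of \<open>g\<close>.
  It is not cancelled by \<open>t^(I + J) f\<close>: the support of \<open>f\<close> lies in the Newton polyhedron of
  \<open>g\<close>, so all its exponents are at least the leading exponent of \<open>g\<close>.\<close>

lemma binomial_square_lex_witness:
  fixes f g :: "('n::finite, 'k::field) ps"
  assumes ws: "admissible_weights (a # ws)" and IJ: "lex_le (a # ws) I J" "I \<noteq> J"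
    and vg: "lex_least (a # ws) (supp (ps_coeff g)) vg"
    and fg: "expo_emb ` supp (ps_coeff f) \<subseteq> newton_polyhedron (supp (ps_coeff g))"
  defines "G \<equiv> g * (ps_monom I + ps_monom J) * (ps_monom I + ps_monom J)"
  shows "vg + I + I \<in> supp (ps_coeff (G - ps_monom (I + J) * f))"
    and "\<forall>z \<in> supp (ps_coeff G). inner a (expo_emb (vg + I + I)) \<le> inner a (expo_emb z)"
proof -
  let ?u = "ps_monom I + ps_monom J :: ('n, 'k) ps"
  have u: "lex_least (a # ws) (supp (ps_coeff ?u)) I" "ps_coeff ?u I = 1"
    using supp_binomial[OF IJ(2)] IJ(1) by (auto simp: lex_least_def)
  have gu: "lex_least (a # ws) (supp (ps_coeff (g * ?u))) (vg + I)"
    "ps_coeff (g * ?u) (vg + I) = ps_coeff g vg"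
    using lex_least_supp_mps_mult[OF ws vg u(1)] u(2) by simp_all
  have G: "lex_least (a # ws) (supp (ps_coeff G)) (vg + I + I)"
    "ps_coeff G (vg + I + I) = ps_coeff g vg"
    using lex_least_supp_mps_mult[OF ws gu(1) u(1)] u(2) gu(2) by (simp_all add: G_def)
  have "ps_coeff (ps_monom (I + J) * f) (vg + I + I) = 0"
  proof (rule ccontr)
    assume "ps_coeff (ps_monom (I + J) * f) (vg + I + I) \<noteq> 0"
    then have "vg + I + I \<in> supp (mps_mult (monom_t (I + J)) (ps_coeff f))"
      by (simp add: supp_def)
    then obtain s where s: "s \<in> supp (ps_coeff f)" "vg + I + I = I + J + s"
      using supp_mps_mult[of "monom_t (I + J)" "ps_coeff f"] by auto
    have "lex_nonneg (a # ws) (expo_emb s - expo_emb vg)"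
      using lex_least_newton_polyhedron[OF _ vg] fg s(1) ws by (auto simp: admissible_weights_def)
    moreover have "expo_emb s - expo_emb vg = expo_emb I - expo_emb J"
      using arg_cong[OF s(2), of expo_emb] by (simp add: expo_emb_add algebra_simps)
    ultimately have "lex_le (a # ws) J I"
      by (simp add: lex_le_def)
    then show False
      using lex_le_antisym[OF ws IJ(1)] IJ(2) by simp
  qed
  then show "vg + I + I \<in> supp (ps_coeff (G - ps_monom (I + J) * f))"
    using G(2) vg by (simp add: supp_def lex_least_def del: ps_coeff_times)
  show "\<forall>z \<in> supp (ps_coeff G). inner a (expo_emb (vg + I + I)) \<le> inner a (expo_emb z)"
    using G(1) by (auto simp: lex_least_def intro: lex_le_Cons_imp_inner_le)
qed

text \<open>With \<open>h = G - t^(I + J) f\<close> we have \<open>1 - (f / g) t^(I + J) / (t^I + t^J)^2 = h / G\<close>,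
  so the claim says that \<open>G / h\<close> lies in the ring.\<close>

lemma newton_polyhedron_binomial_square:
  fixes f g :: "('n::finite, 'k::field) ps"
  assumes "I \<noteq> J" "g \<noteq> 0"
    and fg: "expo_emb ` supp (ps_coeff f) \<subseteq> newton_polyhedron (supp (ps_coeff g))"
  defines "G \<equiv> g * (ps_monom I + ps_monom J) * (ps_monom I + ps_monom J)"
  shows "expo_emb ` supp (ps_coeff G) \<subseteq>
    newton_polyhedron (supp (ps_coeff (G - ps_monom (I + J) * f)))"
proof (rule image_subsetI, rule ccontr)
  let ?h = "G - ps_monom (I + J) * f"
  fix z
  assume z: "z \<in> supp (ps_coeff G)" and "expo_emb z \<notin> newton_polyhedron (supp (ps_coeff ?h))"
  from this(2) obtain a ws where ws: "admissible_weights (a # ws)"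
    and sep: "\<forall>x \<in> newton_polyhedron (supp (ps_coeff ?h)). inner a (expo_emb z) < inner a x"
    by (rule separating_admissible_weights)
  obtain vg where vg: "lex_least (a # ws) (supp (ps_coeff g)) vg"
    using lex_least_exists[of "a # ws"] ws \<open>g \<noteq> 0\<close> by (metis admissible_weights_def ps_eq_0_iff)
  have "\<exists>v \<in> supp (ps_coeff ?h). inner a (expo_emb v) \<le> inner a (expo_emb z)"
  proof (cases "lex_le (a # ws) I J")
    case True
    then show ?thesis
      using binomial_square_lex_witness[OF ws True \<open>I \<noteq> J\<close> vg fg] z by (auto simp: G_def)
  next
    case False
    then have "lex_le (a # ws) J I"
      using lex_le_total by blast
    moreover have "G = g * (ps_monom J + ps_monom I) * (ps_monom J + ps_monom I)" "J + I = I + J"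
      by (simp_all add: G_def add.commute)
    ultimately show ?thesis
      using binomial_square_lex_witness[OF ws _ \<open>I \<noteq> J\<close>[symmetric] vg fg] z by auto
  qed
  then show False
    using sep by (force dest: expo_emb_mem_newton_polyhedron)
qed

lemma complement_of_binomial_ratio_invertible:
  fixes r m :: "('n::finite, 'k::field) laurent"
  assumes "I \<noteq> J" "r \<in> laurent_circ" "m \<in> laurent_circ"
    and one: "frac_add m (frac_mult r (frac_of (ps_monom (I + J))
      ((ps_monom I + ps_monom J) * (ps_monom I + ps_monom J)))) = frac_one"
  shows "\<exists>w \<in> laurent_circ. frac_mult m w = frac_one"
proof -
  let ?u = "ps_monom I + ps_monom J :: ('n, 'k) ps"
  obtain f g where fg: "g \<noteq> 0" "r = frac_of f g"
    "expo_emb ` supp (ps_coeff f) \<subseteq> newton_polyhedron (supp (ps_coeff g))"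
    using assms(2) by (auto simp: laurent_circ_iff)
  obtain p q where pq: "q \<noteq> 0" "m = frac_of p q"
    using assms(3) by (auto simp: laurent_circ_iff)
  have "?u \<noteq> 0"
    using supp_binomial[OF \<open>I \<noteq> J\<close>] by (auto simp: ps_eq_0_iff)
  define G where "G = g * ?u * ?u"
  define h where "h = G - ps_monom (I + J) * f"
  have "G \<noteq> 0"
    using \<open>g \<noteq> 0\<close> \<open>?u \<noteq> 0\<close> by (simp add: G_def)
  have "frac_of (p * G + f * ps_monom (I + J) * q) (q * G) = frac_of 1 1"
    using one \<open>g \<noteq> 0\<close> \<open>?u \<noteq> 0\<close> \<open>q \<noteq> 0\<close> \<open>G \<noteq> 0\<close>
    by (simp add: fg(2) pq(2) frac_mult_frac_of frac_add_frac_of frac_one_eq G_def mult.assoc)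
  then have "p * G = q * h"
    using \<open>q \<noteq> 0\<close> \<open>G \<noteq> 0\<close> by (simp add: frac_of_eq_iff h_def algebra_simps)
  then have m: "m = frac_of h G"
    using \<open>q \<noteq> 0\<close> \<open>G \<noteq> 0\<close> by (simp add: pq(2) frac_of_eq_iff mult.commute)
  have dom: "expo_emb ` supp (ps_coeff G) \<subseteq> newton_polyhedron (supp (ps_coeff h))"
    unfolding G_def h_def by (rule newton_polyhedron_binomial_square[OF \<open>I \<noteq> J\<close> fg(1,3)])
  then have "h \<noteq> 0"
    using \<open>G \<noteq> 0\<close> by (auto simp: ps_eq_0_iff)
  then have "frac_of G h \<in> laurent_circ" "frac_mult m (frac_of G h) = frac_one"
    using dom \<open>G \<noteq> 0\<close>
    by (auto simp: m frac_mult_frac_of frac_one_eq frac_of_eq_iff intro: frac_of_mem_laurent_circI)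
  then show ?thesis
    by blast
qed

section \<open>Ideals containing complementary elements\<close>

lemma (in ideal) carrier_if_Units_mem:
  assumes "x \<in> Units R" "x \<in> I"
  shows "I = carrier R"
proof -
  obtain y where "y \<in> carrier R" "y \<otimes> x = \<one>"
    using assms(1) by (auto simp: Units_def)
  then have "\<one> \<in> I"
    using I_l_closed[OF assms(2)] by metis
  then show ?thesis
    by (rule one_imp_carrier)
qed

lemma (in maximalideal) Units_not_mem: "x \<in> Units R \<Longrightarrow> x \<notin> I"
  using carrier_if_Units_mem I_notcarr by blast

lemma (in cring) mem_maximalideal_if_complements_Units:
  assumes M: "maximalideal M R" and z: "z \<in> carrier R"
    and units: "\<And>r m. r \<in> carrier R \<Longrightarrow> m \<in> carrier R \<Longrightarrow> m \<oplus> r \<otimes> z = \<one> \<Longrightarrow> m \<in> Units R"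
  shows "z \<in> M"
proof (rule ccontr)
  assume "z \<notin> M"
  interpret maximalideal M R
    by (rule M)
  let ?J = "M <+>\<^bsub>R\<^esub> PIdl z"
  have J: "ideal ?J R"
    by (rule add_ideals[OF is_ideal cgenideal_ideal[OF z]])
  have "M \<subseteq> ?J"
  proof
    fix m
    assume "m \<in> M"
    moreover have "m = m \<oplus> \<zero> \<otimes> z"
      using Icarr[OF \<open>m \<in> M\<close>] z by simp
    ultimately show "m \<in> ?J"
      unfolding set_add_def' cgenideal_def by blast
  qed
  moreover have "z \<in> ?J"
  proof -
    have "z = \<zero> \<oplus> \<one> \<otimes> z"
      using z by simp
    then show ?thesis
      using additive_subgroup.zero_closed[OF is_additive_subgroup]
      unfolding set_add_def' cgenideal_def by blast
  qed
  moreover have "?J \<subseteq> carrier R"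
    using ideal.Icarr[OF J] by blast
  ultimately have "?J = carrier R"
    using I_maximal[OF J] \<open>z \<notin> M\<close> by blast
  then obtain m r where "m \<in> M" "r \<in> carrier R" "\<one> = m \<oplus> r \<otimes> z"
    using one_closed unfolding set_add_def' cgenideal_def by blast
  then have "m \<in> Units R"
    using units Icarr by metis
  then show False
    using Units_not_mem \<open>m \<in> M\<close> by blast
qed

lemma (in ideal) add_mult_add_eq:
  assumes "x \<in> carrier R" "y \<in> carrier R" "i \<in> I" "j \<in> I"
  obtains k where "k \<in> I" "(x \<oplus> i) \<otimes> (y \<oplus> j) = x \<otimes> y \<oplus> k"
proof
  have carr: "i \<in> carrier R" "j \<in> carrier R"
    using assms(3,4) by (simp_all add: Icarr)
  show "x \<otimes> j \<oplus> i \<otimes> y \<oplus> i \<otimes> j \<in> I"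
    using assms I_l_closed I_r_closed carr
    by (intro additive_subgroup.a_closed[OF is_additive_subgroup]) auto
  show "(x \<oplus> i) \<otimes> (y \<oplus> j) = x \<otimes> y \<oplus> (x \<otimes> j \<oplus> i \<otimes> y \<oplus> i \<otimes> j)"
    using assms(1,2) carr by (simp add: l_distr r_distr a_ac)
qed

lemma (in ideal) one_mem_if_complements_multiply:
  assumes carr: "a \<in> carrier R" "b \<in> carrier R" "c \<in> carrier R"
    and compl: "a \<oplus> u = \<one>" "b \<oplus> v = \<one>" "c \<oplus> w = \<one>"
    and mem: "u \<in> I" "v \<in> I" "w \<in> I"
    and prod: "a \<otimes> b \<otimes> c = u \<otimes> v \<otimes> w"
  shows "\<one> \<in> I"
proof -
  obtain k where k: "k \<in> I" "(a \<oplus> u) \<otimes> (b \<oplus> v) = a \<otimes> b \<oplus> k"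
    using add_mult_add_eq carr mem by metis
  obtain k' where k': "k' \<in> I" "(a \<otimes> b \<oplus> k) \<otimes> (c \<oplus> w) = a \<otimes> b \<otimes> c \<oplus> k'"
    using add_mult_add_eq[of "a \<otimes> b" c k w] carr k(1) mem(3) by blast
  have "\<one> = (a \<oplus> u) \<otimes> (b \<oplus> v) \<otimes> (c \<oplus> w)"
    using compl by simp
  also have "\<dots> = u \<otimes> v \<otimes> w \<oplus> k'"
    using k k' prod by simp
  finally show ?thesis
    using mem k'(1) Icarr I_r_closed additive_subgroup.a_closed[OF is_additive_subgroup] by metis
qed

section \<open>The elements \<open>t^I / (t^I + t^J)\<close>\<close>

definition mono_ratio :: "'n expo \<Rightarrow> 'n expo \<Rightarrow> ('n::finite, 'k::field) laurent" where
  "mono_ratio I J = frac_of (ps_monom I) (ps_monom I + ps_monom J)"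

lemma mord_iff_mono_ratio: "mord M I J \<longleftrightarrow> mono_ratio I J \<notin> M"
  by (simp add: mord_def mono_ratio_def frac_of_def)

text \<open>For \<open>I = J\<close> the sum is \<open>2 t^I\<close>; this is where characteristic zero is used.\<close>

lemma binomial_coeff_ne_zero:
  "ps_coeff (ps_monom I + ps_monom J :: ('n::finite, 'k::field_char_0) ps) I \<noteq> 0"
  by (simp add: monom_t_def)

lemma binomial_ne_zero [simp]: "ps_monom I + ps_monom J \<noteq> (0 :: ('n::finite, 'k::field_char_0) ps)"
  using binomial_coeff_ne_zero[of I J] by (metis ps_coeff_zero zero_fun_apply)

lemma mono_ratio_mem_laurent_circ [simp]:
  "(mono_ratio I J :: ('n::finite, 'k::field_char_0) laurent) \<in> laurent_circ"
proof -
  have "I \<in> supp (ps_coeff (ps_monom I + ps_monom J :: ('n, 'k) ps))"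
    using binomial_coeff_ne_zero[of I J] unfolding supp_def by blast
  then show ?thesis
    unfolding mono_ratio_def
    by (intro frac_of_mem_laurent_circI) (auto intro: expo_emb_mem_newton_polyhedron)
qed

lemma frac_add_mono_ratio_swap:
  "frac_add (mono_ratio I J) (mono_ratio J I) =
    (frac_one :: ('n::finite, 'k::field_char_0) laurent)"
proof -
  let ?u = "ps_monom I + ps_monom J :: ('n, 'k) ps"
  let ?v = "ps_monom J + ps_monom I :: ('n, 'k) ps"
  have "frac_add (mono_ratio I J) (mono_ratio J I) =
      frac_of (ps_monom I * ?v + ps_monom J * ?u) (?u * ?v)"
    by (simp add: mono_ratio_def frac_add_frac_of)
  also have "\<dots> = frac_of 1 1"
    by (simp only: frac_of_eq_iff[of "?u * ?v" 1, simplified]) (simp add: algebra_simps)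
  finally show ?thesis
    by (simp add: frac_one_eq)
qed

lemma mono_ratio_shift:
  "mono_ratio (I + L) (J + L) = (mono_ratio I J :: ('n::finite, 'k::field_char_0) laurent)"
  unfolding mono_ratio_def
  by (simp only: frac_of_eq_iff[OF binomial_ne_zero binomial_ne_zero])
     (simp add: algebra_simps flip: ps_monom_mult)

lemma frac_mult_mono_ratio_swap:
  "frac_mult (mono_ratio I J) (mono_ratio J I) =
    (frac_of (ps_monom (I + J)) ((ps_monom I + ps_monom J) * (ps_monom I + ps_monom J))
      :: ('n::finite, 'k::field_char_0) laurent)"
  by (simp add: mono_ratio_def frac_mult_frac_of ps_monom_mult add.commute)

lemma mono_ratio_cycle:
  "frac_mult (frac_mult (mono_ratio I J) (mono_ratio J L)) (mono_ratio L I) =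
   (frac_mult (frac_mult (mono_ratio J I) (mono_ratio L J)) (mono_ratio I L)
      :: ('n::finite, 'k::field_char_0) laurent)"
  by (simp add: mono_ratio_def frac_mult_frac_of ac_simps)

lemma frac_mult_mono_ratio_zero:
  "frac_mult (mono_ratio 0 J) (frac_of (1 + ps_monom J) 1) =
    (frac_one :: ('n::finite, 'k::field_char_0) laurent)"
  and frac_of_one_plus_monom_mem: "(frac_of (1 + ps_monom J) 1 :: ('n, 'k) laurent) \<in> laurent_circ"
proof -
  have "1 + ps_monom J \<noteq> (0 :: ('n, 'k) ps)"
    using binomial_ne_zero[of 0 J] by simp
  then show "frac_mult (mono_ratio 0 J) (frac_of (1 + ps_monom J) 1) =
      (frac_one :: ('n, 'k) laurent)"
    by (simp add: mono_ratio_def frac_mult_frac_of frac_one_eq frac_of_eq_iff)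
  have "expo_emb 0 + expo_emb s \<in> newton_polyhedron (supp (ps_coeff (1 :: ('n, 'k) ps)))" for s
    by (intro newton_polyhedron_add_nonneg expo_emb_mem_newton_polyhedron allI expo_emb_nonneg) simp
  then show "(frac_of (1 + ps_monom J) 1 :: ('n, 'k) laurent) \<in> laurent_circ"
    by (intro frac_of_mem_laurent_circI) auto
qed

context
  fixes M :: "('n::finite, 'k::field_char_0) laurent set"
  assumes M: "maximalideal M laurent_circ_ring"
begin

lemma cring_laurent_circ_ring: "cring (laurent_circ_ring :: ('n, 'k) laurent ring)"
proof -
  interpret ring "laurent_circ_ring :: ('n, 'k) laurent ring"
    using M by (simp add: maximalideal_def ideal_def)
  have "x \<otimes>\<^bsub>laurent_circ_ring\<^esub> y = y \<otimes>\<^bsub>laurent_circ_ring\<^esub> x"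
    if "x \<in> laurent_circ" "y \<in> laurent_circ" for x y :: "('n, 'k) laurent"
    using that by (auto simp: laurent_circ_iff frac_mult_frac_of mult.commute)
  then show ?thesis
    by unfold_locales auto
qed

lemma frac_one_not_mem: "frac_one \<notin> M"
proof -
  interpret maximalideal M laurent_circ_ring
    by (rule M)
  show ?thesis
    using one_imp_carrier I_notcarr by auto
qed

lemma mono_ratio_total: "mono_ratio I J \<notin> M \<or> mono_ratio J I \<notin> M"
proof (rule ccontr)
  interpret maximalideal M laurent_circ_ring
    by (rule M)
  assume "\<not> (mono_ratio I J \<notin> M \<or> mono_ratio J I \<notin> M)"
  then have "frac_add (mono_ratio I J) (mono_ratio J I) \<in> M"
    using additive_subgroup.a_closed[OF is_additive_subgroup] by auto
  then show False
    using frac_one_not_mem by (simp add: frac_add_mono_ratio_swap)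
qed

text \<open>The product \<open>t^(I + J) / (t^I + t^J)^2\<close> of the two ratios lies in every maximal ideal,
  and \<open>M\<close> is prime.\<close>

lemma mono_ratio_swap_mem:
  assumes "I \<noteq> J" "mono_ratio I J \<notin> M"
  shows "mono_ratio J I \<in> M"
proof (rule ccontr)
  assume "mono_ratio J I \<notin> M"
  interpret cring "laurent_circ_ring :: ('n, 'k) laurent ring"
    by (rule cring_laurent_circ_ring)
  let ?z = "frac_mult (mono_ratio I J) (mono_ratio J I) :: ('n, 'k) laurent"
  have "?z \<in> M"
  proof (rule mem_maximalideal_if_complements_Units[OF M])
    show "?z \<in> carrier laurent_circ_ring"
      using m_closed by simp
    fix r m
    assume "r \<in> carrier laurent_circ_ring" "m \<in> carrier laurent_circ_ring"
      "m \<oplus>\<^bsub>laurent_circ_ring\<^esub> r \<otimes>\<^bsub>laurent_circ_ring\<^esub> ?z = \<one>\<^bsub>laurent_circ_ring\<^esub>"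
    then have "\<exists>w \<in> laurent_circ. frac_mult m w = frac_one"
      by (intro complement_of_binomial_ratio_invertible[OF \<open>I \<noteq> J\<close>])
         (simp_all add: frac_mult_mono_ratio_swap)
    then obtain w where "w \<in> laurent_circ" "frac_mult m w = frac_one"
      by blast
    then show "m \<in> Units laurent_circ_ring"
      using \<open>m \<in> carrier laurent_circ_ring\<close> Units_one_closed by (intro unit_factor[of m w]) simp_all
  qed
  then show False
    using primeideal.I_prime[OF maximalideal_prime[OF M], of "mono_ratio I J" "mono_ratio J I"]
      assms(2)
      \<open>mono_ratio J I \<notin> M\<close> by simp
qed

text \<open>Otherwise, modulo \<open>M\<close> the left-hand side of \<open>mono_ratio_cycle\<close> would be
  \<open>1\<close> and the right-hand side \<open>0\<close>.\<close>

lemma mono_ratio_trans: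
  assumes IJ: "mono_ratio I J \<notin> M" and JL: "mono_ratio J L \<notin> M"
  shows "mono_ratio I L \<notin> M"
proof (cases "I = J \<or> J = L \<or> I = L")
  case True
  then show ?thesis
    using IJ JL mono_ratio_total[of I I] by auto
next
  case False
  interpret ideal M laurent_circ_ring
    using M by (rule maximalideal.axioms)
  show ?thesis
  proof
    assume "mono_ratio I L \<in> M"
    have cycle: "frac_mult (frac_mult (mono_ratio I J) (mono_ratio J L)) (mono_ratio L I) =
        (frac_mult (frac_mult (mono_ratio J I) (mono_ratio L J)) (mono_ratio I L)
          :: ('n, 'k) laurent)"
      by (rule mono_ratio_cycle)
    have "\<one>\<^bsub>laurent_circ_ring\<^esub> \<in> M"
      using one_mem_if_complements_multiply[of "mono_ratio I J" "mono_ratio J L" "mono_ratio L I"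
          "mono_ratio J I" "mono_ratio L J" "mono_ratio I L"]
        mono_ratio_swap_mem[OF _ IJ] mono_ratio_swap_mem[OF _ JL] \<open>mono_ratio I L \<in> M\<close> False cycle
      by (simp add: frac_add_mono_ratio_swap)
    then show False
      using frac_one_not_mem by simp
  qed
qed

lemma mono_ratio_zero_not_mem: "mono_ratio 0 J \<notin> M"
proof -
  interpret maximalideal M laurent_circ_ring
    by (rule M)
  interpret cring "laurent_circ_ring :: ('n, 'k) laurent ring"
    by (rule cring_laurent_circ_ring)
  let ?w = "frac_of (1 + ps_monom J) 1 :: ('n, 'k) laurent"
  have w: "?w \<in> laurent_circ" "frac_mult (mono_ratio 0 J) ?w = frac_one"
    by (rule frac_of_one_plus_monom_mem, rule frac_mult_mono_ratio_zero)
  have "(mono_ratio 0 J :: ('n, 'k) laurent) \<in> Units laurent_circ_ring"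
    by (rule unit_factor[of _ ?w]) (use Units_one_closed w in simp_all)
  then show ?thesis
    by (rule Units_not_mem)
qed

end

theorem proposition4p11:
  fixes M :: "(('n::finite, 'k::field_char_0) mps \<times> ('n, 'k) mps) set set"
  assumes "maximalideal M laurent_circ_ring"
  shows "(\<forall>I. mord M I I)
    \<and> (\<forall>I J. mord M I J \<and> mord M J I \<longrightarrow> I = J)
    \<and> (\<forall>I J L. mord M I J \<and> mord M J L \<longrightarrow> mord M I L)
    \<and> (\<forall>I J. mord M I J \<or> mord M J I)
    \<and> (\<forall>J. mord M expo_zero J)
    \<and> (\<forall>I J L. mord M I J \<longrightarrow> mord M (expo_add I L) (expo_add J L))"
proof -
  have reflexive: "\<forall>I. mono_ratio I I \<notin> M"
    using mono_ratio_total[OF assms] by blast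
  have antisymmetric: "\<forall>I J. mono_ratio I J \<notin> M \<and> mono_ratio J I \<notin> M \<longrightarrow> I = J"
    using mono_ratio_swap_mem[OF assms] by blast
  have transitive: "\<forall>I J L. mono_ratio I J \<notin> M \<and> mono_ratio J L \<notin> M \<longrightarrow> mono_ratio I L \<notin> M"
    using mono_ratio_trans[OF assms] by blast
  have total: "\<forall>I J. mono_ratio I J \<notin> M \<or> mono_ratio J I \<notin> M"
    using mono_ratio_total[OF assms] by blast
  have zero_least: "\<forall>J. mono_ratio expo_zero J \<notin> M"
    using mono_ratio_zero_not_mem[OF assms] by simp
  have shift_invariant: "\<forall>I J L. mono_ratio I J \<notin> M \<longrightarrow> mono_ratio (expo_add I L) (expo_add J L) \<notin> M"
    by (simp add: mono_ratio_shift)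
  show ?thesis
    unfolding mord_iff_mono_ratio
    by (intro conjI reflexive antisymmetric transitive total zero_least shift_invariant)
qed

end
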